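(* Fix an integer $n\ge 1$. For $m>n$ let \[ \begin{split}\delta_{m,n}(p) &= 9 + n (m^2 (2 + n)^2 + 3 (4 + n) - 2 m (5 + 2n)) - 24 p - n (12 + m^2 (2 + n) + 2 m n (3 + n)) p \\ &\qquad{}+(22 + n (8 + 2 m (1 + n) + n (3 + n))) p^2 - (8 + n (2 + n)) p^3 + p^4 ,\end{split} \] and let $p^*(m,n)$ be the real root of $\delta_{m,n}(p)=0$ that grows with $m$ (of order $m^{2/3}$). Then as $m\to\infty$, \[ p^*(m,n) = m^{2/3} (n (2 + n))^{1/3} - m^{1/3}\cdot\frac{2 n (1 + n)}{3 (n (2 + n))^{1/3}} + \frac{1}{3}(6 + n + n^2) - m^{-1/3}\cdot\frac{2 n^2 (216 + 230 n + 87 n^2 + 24 n^3 + 5 n^4)}{81 (n (2 + n))^{5/3}} + o(m^{-1/3}). \]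
   Context: $\delta_{m,n}(p)$ is a quartic polynomial in $p$ whose appropriate root (rounded) gives the optimal training-set size for a linear regression with $m$ Gaussian data points of dimension $n$. *)

theory Defs
  imports Complex_Main "HOL-Library.Landau_Symbols"
begin

definition delta :: "real \<Rightarrow> real \<Rightarrow> real \<Rightarrow> real" where
  "delta m n p =
     9 + n * (m^2 * (2 + n)^2 + 3 * (4 + n) - 2 * m * (5 + 2*n)) - 24 * p
     - n * (12 + m^2 * (2 + n) + 2 * m * n * (3 + n)) * p
     + (22 + n * (8 + 2 * m * (1 + n) + n * (3 + n))) * p^2
     - (8 + n * (2 + n)) * p^3 + p^4"

definition pstar_approx :: "real \<Rightarrow> real \<Rightarrow> real" where
  "pstar_approx m n =
     m powr (2/3) * (n * (2 + n)) powr (1/3)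
     - m powr (1/3) * (2 * n * (1 + n)) / (3 * (n * (2 + n)) powr (1/3))
     + (6 + n + n^2) / 3
     - m powr (-1/3) * (2 * n^2 * (216 + 230*n + 87*n^2 + 24*n^3 + 5*n^4))
         / (81 * (n * (2 + n)) powr (5/3))"

end

theory Submission
  imports Defs
    "HOL-Analysis.Elementary_Metric_Spaces"
    "HOL-Computational_Algebra.Polynomial"
    "HOL-Real_Asymp.Real_Asymp"
begin

text \<open>Substituting u = m^(-1/3) and q = p u^2 turns delta(m, n, p) = 0 into G(q, u) = 0 for
  a polynomial G with G(q, 0) = q (q^3 - n(n+2)). Since p has order m^(2/3), q stays bounded
  and away from 0, so it tends to the simple root a = (n(n+2))^(1/3). In these variables the
  approximation pstar_approx becomes a cubic X(u) whose coefficients are exactly those making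
  G(X(u), u) = O(u^4); since the q-derivative of G at (a, 0) is 3 n(n+2), which is nonzero, this
  forces q - X(u) = O(u^4), i.e. p - pstar_approx = O(m^(-2/3)).\<close>

text \<open>Stated over an arbitrary commutative ring so that it can also be evaluated at
  polynomials in u, which turns the matching of coefficients into a statement about coeff.\<close>

definition rescaled_delta :: "'a::comm_ring_1 \<Rightarrow> 'a \<Rightarrow> 'a \<Rightarrow> 'a" where
  "rescaled_delta N q u =
     q^4 - (8 + N*(2+N)) * u^2 * q^3
     + ((22 + 8*N + N^2*(3+N)) * u^4 + 2*N*(1+N) * u) * q^2
     - (N*(2+N) + 2*N^2*(3+N) * u^3 + (24 + 12*N) * u^6) * q
     + N*(2+N)^2 * u^2 - 2*N*(5+2*N) * u^5 + (9 + 3*N*(4+N)) * u^8"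

lemma delta_rescale:
  fixes m N p u :: real
  assumes "m * u^3 = 1"
  shows "delta m N p * u^8 = rescaled_delta N (p * u^2) u"
  using assms unfolding delta_def rescaled_delta_def by algebra

lemma rescaled_delta_at_zero: "rescaled_delta N q 0 = q^4 - N*(2+N)*q"
  by (simp add: rescaled_delta_def)

lemma poly_rescaled_delta:
  "poly (rescaled_delta [:N:] P [:0, 1:]) u = rescaled_delta N (poly P u) u"
  by (simp add: rescaled_delta_def algebra_simps)

definition rescaled_delta_slope :: "real \<Rightarrow> real \<Rightarrow> real \<Rightarrow> real \<Rightarrow> real" where
  "rescaled_delta_slope N q r u =
     (q^3 + q^2*r + q*r^2 + r^3) - (8 + N*(2+N)) * u^2 * (q^2 + q*r + r^2)
     + ((22 + 8*N + N^2*(3+N)) * u^4 + 2*N*(1+N) * u) * (q + r)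
     - (N*(2+N) + 2*N^2*(3+N) * u^3 + (24 + 12*N) * u^6)"

lemma rescaled_delta_diff:
  "rescaled_delta N q u - rescaled_delta N r u = (q - r) * rescaled_delta_slope N q r u"
  unfolding rescaled_delta_def rescaled_delta_slope_def by algebra

lemma tendsto_diff_compact_slice:
  fixes f :: "'a::metric_space \<Rightarrow> 'b::heine_borel \<Rightarrow> 'c::real_normed_vector"
  assumes "compact K" and cont: "continuous_on (K \<times> UNIV) (\<lambda>z. f (fst z) (snd z))"
    and u: "(u \<longlongrightarrow> u0) F" and q: "\<forall>\<^sub>F x in F. q x \<in> K"
  shows "((\<lambda>x. f (q x) (u x) - f (q x) u0) \<longlongrightarrow> 0) F"
proof (rule tendstoI)
  fix e :: real assume "e > 0"
  let ?S = "K \<times> cball u0 1"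
  have "uniformly_continuous_on ?S (\<lambda>z. f (fst z) (snd z))"
    using compact_Times[OF \<open>compact K\<close> compact_cball] cont
    by (intro compact_uniformly_continuous) (auto intro: continuous_on_subset)
  then obtain d where "d > 0"
    and d: "\<And>z z'. z \<in> ?S \<Longrightarrow> z' \<in> ?S \<Longrightarrow> dist z' z < d \<Longrightarrow>
      dist (f (fst z') (snd z')) (f (fst z) (snd z)) < e"
    using \<open>e > 0\<close> unfolding uniformly_continuous_on_def by metis
  have "\<forall>\<^sub>F x in F. dist (u x) u0 < min d 1"
    using tendstoD[OF u, of "min d 1"] \<open>d > 0\<close> by simp
  with q show "\<forall>\<^sub>F x in F. dist (f (q x) (u x) - f (q x) u0) 0 < e"
  proof eventually_elim
    case (elim x)
    then show ?case
      using d[of "(q x, u0)" "(q x, u x)"] by (simp add: dist_norm dist_Pair_Pair dist_commute)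
  qed
qed

lemma rescaled_delta_root_tendsto:
  fixes q u :: "'a \<Rightarrow> real"
  assumes root: "\<forall>\<^sub>F x in F. rescaled_delta N (q x) (u x) = 0"
    and u: "(u \<longlongrightarrow> 0) F" and q: "q \<in> \<Theta>[F](\<lambda>_. 1)"
    and a3: "a^3 = N*(2+N)"
  shows "(q \<longlongrightarrow> a) F"
proof -
  obtain C where upper: "\<forall>\<^sub>F x in F. \<bar>q x\<bar> \<le> C"
    using landau_o.bigE[OF bigthetaD1[OF q]] by auto
  obtain c where "c > 0" and lower: "\<forall>\<^sub>F x in F. c \<le> \<bar>q x\<bar>"
    using landau_omega.bigE[OF bigthetaD2[OF q]] by auto
  from upper lower have K: "\<forall>\<^sub>F x in F. q x \<in> {-C..-c} \<union> {c..C}"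
    by eventually_elim auto
  \<comment> \<open>Dividing by q removes the spurious root q = 0 of rescaled_delta N q 0.\<close>
  let ?H = "\<lambda>x v. rescaled_delta N (q x) v / q x"
  have "((\<lambda>x. ?H x (u x) - ?H x 0) \<longlongrightarrow> 0) F"
    using \<open>c > 0\<close> unfolding rescaled_delta_def
    by (intro tendsto_diff_compact_slice[OF _ _ u K] continuous_intros) auto
  moreover have "\<forall>\<^sub>F x in F. ?H x (u x) - ?H x 0 = N*(2+N) - q x ^ 3"
    using root K
    by eventually_elim (use \<open>c > 0\<close> in \<open>auto simp: rescaled_delta_at_zero field_simps power_def\<close>)
  ultimately have "((\<lambda>x. N*(2+N) - q x ^ 3) \<longlongrightarrow> 0) F"
    by (simp add: tendsto_cong)
  from tendsto_diff[OF tendsto_const[of "N*(2+N)"] this]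
  have "((\<lambda>x. q x ^ 3) \<longlongrightarrow> a^3) F"
    by (simp add: a3)
  then have "((\<lambda>x. root 3 (q x ^ 3)) \<longlongrightarrow> root 3 (a^3)) F"
    by (rule tendsto_real_root)
  then show ?thesis by (simp add: odd_real_root_power_cancel)
qed

text \<open>At a nonzero root a of a^3 = N(2+N) the factor 4a^3 - N(2+N) = 3a^3 is nonzero, so the
  coefficients 1, 2, 3 determine b1, b2, b3 one after the other; this is where the coefficients
  of pstar_approx come from.\<close>

lemma coeff_rescaled_delta_cubic:
  fixes N a b1 b2 b3 :: real
  defines "P \<equiv> rescaled_delta [:N:] [:a, b1, b2, b3:] [:0, 1:]"
  shows "coeff P 0 = a^4 - N*(2+N)*a"
    and "coeff P 1 = (4*a^3 - N*(2+N)) * b1 + 2*N*(1+N)*a^2"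
    and "coeff P 2 = (4*a^3 - N*(2+N)) * b2 + 6*a^2*b1^2 + 4*N*(1+N)*a*b1
      - (8 + N*(2+N))*a^3 + N*(2+N)^2"
    and "coeff P 3 = (4*a^3 - N*(2+N)) * b3 + 12*a^2*b1*b2 + 4*a*b1^3
      - 3*(8 + N*(2+N))*a^2*b1 + 2*N*(1+N)*(2*a*b2 + b1^2) - 2*N^2*(3+N)*a"
  unfolding P_def rescaled_delta_def
  by (simp_all add: numeral_poly one_pCons numeral_eq_Suc) algebra+

definition pstar_poly :: "real \<Rightarrow> real \<Rightarrow> real poly" where
  "pstar_poly N a = [:a, - 2*N*(1+N) / (3*a), (6 + N + N^2) / 3,
     - 2*N^2*(216 + 230*N + 87*N^2 + 24*N^3 + 5*N^4) / (81*a^5):]"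

lemma coeff_rescaled_delta_pstar_poly:
  fixes N a :: real
  assumes a3: "a^3 = N*(2+N)" and "a \<noteq> 0" and "j < 4"
  shows "coeff (rescaled_delta [:N:] (pstar_poly N a) [:0, 1:]) j = 0"
proof -
  let ?P = "rescaled_delta [:N:] (pstar_poly N a) [:0, 1:]"
  have "coeff ?P 0 = 0" "coeff ?P 1 = 0" "coeff ?P 2 = 0" "coeff ?P 3 = 0"
    unfolding pstar_poly_def coeff_rescaled_delta_cubic using \<open>a \<noteq> 0\<close>
    by (simp_all add: field_simps) (use a3 in algebra)+
  moreover have "j \<in> {0, 1, 2, 3}" using \<open>j < 4\<close> by auto
  ultimately show ?thesis by auto
qed

lemma rescaled_delta_pstar_poly_remainder:
  fixes N a :: real
  assumes "a^3 = N*(2+N)" and "a \<noteq> 0"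
  obtains Q where "\<And>u. rescaled_delta N (poly (pstar_poly N a) u) u = u^4 * poly Q u"
proof -
  have "monom 1 4 dvd rescaled_delta [:N:] (pstar_poly N a) [:0, 1:]"
    using coeff_rescaled_delta_pstar_poly[OF assms] by (simp add: monom_1_dvd_iff')
  then obtain Q where "rescaled_delta [:N:] (pstar_poly N a) [:0, 1:] = monom 1 4 * Q"
    by (rule dvdE)
  then have "rescaled_delta N (poly (pstar_poly N a) u) u = u^4 * poly Q u" for u
    by (metis poly_rescaled_delta poly_mult poly_monom mult_1)
  then show ?thesis by (rule that)
qed

lemma rescaled_delta_root_expansion:
  fixes q u :: "'a \<Rightarrow> real"
  assumes root: "\<forall>\<^sub>F x in F. rescaled_delta N (q x) (u x) = 0"
    and u: "(u \<longlongrightarrow> 0) F" and q: "q \<in> \<Theta>[F](\<lambda>_. 1)"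
    and a3: "a^3 = N*(2+N)" and "a \<noteq> 0"
  shows "(\<lambda>x. q x - poly (pstar_poly N a) (u x)) \<in> O[F](\<lambda>x. u x ^ 4)"
proof -
  let ?X = "\<lambda>x. poly (pstar_poly N a) (u x)"
  let ?slope = "\<lambda>x. rescaled_delta_slope N (q x) (?X x) (u x)"
  obtain Q where Q: "\<And>v. rescaled_delta N (poly (pstar_poly N a) v) v = v^4 * poly Q v"
    using rescaled_delta_pstar_poly_remainder[OF a3 \<open>a \<noteq> 0\<close>] by blast
  have "N*(2+N) \<noteq> 0"
    using a3 \<open>a \<noteq> 0\<close> by auto
  have q_lim: "(q \<longlongrightarrow> a) F"
    using root u q a3 by (rule rescaled_delta_root_tendsto)
  have "(?X \<longlongrightarrow> poly (pstar_poly N a) 0) F"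
    by (intro tendsto_intros u)
  then have X_lim: "(?X \<longlongrightarrow> a) F"
    by (simp add: pstar_poly_def)
  have "(?slope \<longlongrightarrow> rescaled_delta_slope N a a 0) F"
    unfolding rescaled_delta_slope_def by (intro tendsto_intros u q_lim X_lim)
  moreover have "rescaled_delta_slope N a a 0 = 3 * (N*(2+N))"
    using a3 by (simp add: rescaled_delta_slope_def power2_eq_square power3_eq_cube)
  ultimately have slope_lim: "(?slope \<longlongrightarrow> 3 * (N*(2+N))) F"
    by simp
  have "((\<lambda>x. - poly Q (u x) / ?slope x) \<longlongrightarrow> - poly Q 0 / (3 * (N*(2+N)))) F"
    using \<open>N*(2+N) \<noteq> 0\<close> by (intro tendsto_intros u slope_lim) simp
  then have bounded: "(\<lambda>x. - poly Q (u x) / ?slope x) \<in> O[F](\<lambda>_. 1)"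
    by (intro bigoI_tendsto[where c = "- poly Q 0 / (3 * (N*(2+N)))"]) simp_all
  have "\<forall>\<^sub>F x in F. ?slope x \<noteq> 0"
    using slope_lim by (rule tendsto_imp_eventually_ne) (use \<open>N*(2+N) \<noteq> 0\<close> in simp)
  with root have "\<forall>\<^sub>F x in F. q x - ?X x = u x ^ 4 * (- poly Q (u x) / ?slope x)"
  proof eventually_elim
    case (elim x)
    have "(q x - ?X x) * ?slope x = - (u x ^ 4 * poly Q (u x))"
      using rescaled_delta_diff[of N "q x" "u x" "?X x"] elim(1) Q[of "u x"] by simp
    then show ?case
      using elim(2) by (simp add: field_simps)
  qed
  moreover have "(\<lambda>x. u x ^ 4 * (- poly Q (u x) / ?slope x)) \<in> O[F](\<lambda>x. u x ^ 4)"
    using landau_o.big_refl bounded by (rule landau_o.big_1_mult)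
  ultimately show ?thesis
    by (simp add: landau_o.big.in_cong)
qed

lemma pstar_approx_eq_poly:
  fixes m N :: real
  assumes "m > 0" and "N > 0"
  shows "pstar_approx m N =
    poly (pstar_poly N ((N*(2+N)) powr (1/3))) (m powr (-1/3)) / (m powr (-1/3))^2"
proof -
  define s where "s = N*(2+N)"
  define a where "a = s powr (1/3)"
  define u where "u = m powr (-1/3)"
  have "s > 0" "a > 0" "u > 0"
    using assms by (auto simp: s_def a_def u_def)
  then have a5: "s powr (5/3) = a^5"
    by (simp add: a_def powr_power)
  have m23: "m powr (2/3) = 1 / u^2" and m13: "m powr (1/3) = 1 / u"
    using assms(1) by (simp_all add: u_def powr_power powr_minus field_simps)
  show ?thesis
    unfolding pstar_approx_def pstar_poly_def m23 m13 s_def[symmetric] a_def[symmetric] a5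
      u_def[symmetric]
    using \<open>a > 0\<close> \<open>u > 0\<close> by (simp add: field_simps) algebra
qed

lemma delta_root_rescaled:
  fixes p :: "nat \<Rightarrow> real"
  assumes "\<forall>\<^sub>F m in at_top. delta (real m) N (p m) = 0"
  shows "\<forall>\<^sub>F m in at_top.
    rescaled_delta N (p m * (real m powr (-1/3))^2) (real m powr (-1/3)) = 0"
  using assms eventually_gt_at_top[of 0]
proof eventually_elim
  case (elim m)
  then have "real m * (real m powr (-1/3))^3 = 1"
    by (simp add: powr_power powr_minus field_simps)
  with elim(1) show ?case
    by (simp flip: delta_rescale)
qed

lemma pstar_approx_error_bigo:
  fixes p :: "nat \<Rightarrow> real"
  assumes "N > 0"
    and root: "\<forall>\<^sub>F m in at_top. delta (real m) N (p m) = 0"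
    and p: "p \<in> \<Theta>[at_top](\<lambda>m. real m powr (2/3))"
  shows "(\<lambda>m. p m - pstar_approx (real m) N) \<in> O[at_top](\<lambda>m. real m powr (-2/3))"
proof -
  define a where "a = (N*(2+N)) powr (1/3)"
  define u where "u = (\<lambda>m::nat. real m powr (-1/3))"
  define q where "q = (\<lambda>m. p m * u m ^ 2)"
  define X where "X = poly (pstar_poly N a)"
  have "a = root 3 (N*(2+N))"
    using \<open>N > 0\<close> by (simp add: a_def root_powr_inverse)
  then have a3: "a^3 = N*(2+N)" and "a \<noteq> 0"
    using \<open>N > 0\<close> by (auto simp: odd_real_root_pow)
  have "q \<in> \<Theta>(\<lambda>m. real m powr (2/3) * u m ^ 2)"
    unfolding q_def using p by (rule landau_theta.mult_right)
  also have "(\<lambda>m. real m powr (2/3) * u m ^ 2) \<in> \<Theta>(\<lambda>_. 1)"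
    unfolding u_def by real_asymp
  finally have q: "q \<in> \<Theta>(\<lambda>_. 1)" .
  have u: "(u \<longlongrightarrow> 0) at_top"
    unfolding u_def by real_asymp
  have "(\<lambda>m. q m - X (u m)) \<in> O(\<lambda>m. u m ^ 4)"
    using delta_root_rescaled[OF root] u q a3 \<open>a \<noteq> 0\<close> unfolding q_def u_def X_def
    by (rule rescaled_delta_root_expansion)
  then have "(\<lambda>m. (q m - X (u m)) / u m ^ 2) \<in> O(\<lambda>m. u m ^ 4 / u m ^ 2)"
    by (intro landau_o.big.divide_right) (simp add: u_def)
  also have "(\<lambda>m. u m ^ 4 / u m ^ 2) \<in> O(\<lambda>m. real m powr (-2/3))"
    unfolding u_def by real_asymp
  finally have "(\<lambda>m. (q m - X (u m)) / u m ^ 2) \<in> O(\<lambda>m. real m powr (-2/3))" .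
  moreover have "\<forall>\<^sub>F m in at_top.
      (q m - X (u m)) / u m ^ 2 = p m - pstar_approx (real m) N"
    using eventually_gt_at_top[of 0] by eventually_elim
      (use \<open>N > 0\<close> in
        \<open>simp add: pstar_approx_eq_poly q_def a_def u_def X_def diff_divide_distrib\<close>)
  ultimately show ?thesis
    by (simp add: landau_o.big.in_cong)
qed

theorem corollary1:
  fixes n :: nat and p :: "nat \<Rightarrow> real"
  assumes "n \<ge> 1"
    and "\<forall>\<^sub>F m in at_top. delta (real m) (real n) (p m) = 0"
    and "p \<in> \<Theta>[at_top](\<lambda>m. real m powr (2/3))"
  shows "(\<lambda>m. p m - pstar_approx (real m) (real n)) \<in> o[at_top](\<lambda>m. real m powr (-1/3))"
proof -
  have "(\<lambda>m. p m - pstar_approx (real m) (real n)) \<in> O(\<lambda>m. real m powr (-2/3))"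
    using assms by (intro pstar_approx_error_bigo) auto
  also have "(\<lambda>m. real m powr (-2/3)) \<in> o(\<lambda>m. real m powr (-1/3))"
    by real_asymp
  finally show ?thesis .
qed

end
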